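(* Let $\Gamma$ be a vertex-transitive graph on $n$ vertices. Then $\Gamma$ has an induced subgraph $\Gamma'$ with at least $e(\Gamma)/2$ edges satisfying $\chi(\overline{\Gamma'})\le (\ln 4)\,n/\omega(\Gamma)$.
   Context: $\omega(\Gamma)$ is the clique number of $\Gamma$, $\overline{\Gamma'}$ is the complement of $\Gamma'$, and $\chi$ denotes chromatic number. *)

theory Defs
  imports Complex_Main
begin

definition simple_graph :: "'a set \<Rightarrow> 'a set set \<Rightarrow> bool" where
  "simple_graph V E \<longleftrightarrow> finite V \<and>
     (\<forall>e\<in>E. \<exists>u v. e = {u, v} \<and> u \<noteq> v \<and> u \<in> V \<and> v \<in> V)"

definition num_edges :: "'a set set \<Rightarrow> nat" where
  "num_edges E = card E"

definition graph_automorphism :: "'a set \<Rightarrow> 'a set set \<Rightarrow> ('a \<Rightarrow> 'a) \<Rightarrow> bool" where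
  "graph_automorphism V E f \<longleftrightarrow> bij_betw f V V \<and>
     (\<forall>u\<in>V. \<forall>v\<in>V. {u, v} \<in> E \<longleftrightarrow> {f u, f v} \<in> E)"

definition vertex_transitive :: "'a set \<Rightarrow> 'a set set \<Rightarrow> bool" where
  "vertex_transitive V E \<longleftrightarrow>
     (\<forall>u\<in>V. \<forall>v\<in>V. \<exists>f. graph_automorphism V E f \<and> f u = v)"

definition is_clique :: "'a set \<Rightarrow> 'a set set \<Rightarrow> 'a set \<Rightarrow> bool" where
  "is_clique V E C \<longleftrightarrow> C \<subseteq> V \<and> (\<forall>u\<in>C. \<forall>v\<in>C. u \<noteq> v \<longrightarrow> {u, v} \<in> E)"

definition clique_number :: "'a set \<Rightarrow> 'a set set \<Rightarrow> nat" where
  "clique_number V E = Max {card C | C. is_clique V E C}"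

definition induced_edges :: "'a set set \<Rightarrow> 'a set \<Rightarrow> 'a set set" where
  "induced_edges E S = {e \<in> E. e \<subseteq> S}"

definition complement_edges :: "'a set \<Rightarrow> 'a set set \<Rightarrow> 'a set set" where
  "complement_edges V E = {{u, v} | u v. u \<in> V \<and> v \<in> V \<and> u \<noteq> v \<and> {u, v} \<notin> E}"

definition proper_colouring :: "'a set \<Rightarrow> 'a set set \<Rightarrow> nat \<Rightarrow> ('a \<Rightarrow> nat) \<Rightarrow> bool" where
  "proper_colouring V E k c \<longleftrightarrow> c ` V \<subseteq> {..<k} \<and>
     (\<forall>u\<in>V. \<forall>v\<in>V. {u, v} \<in> E \<longrightarrow> c u \<noteq> c v)"

definition chromatic_number :: "'a set \<Rightarrow> 'a set set \<Rightarrow> nat" where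
  "chromatic_number V E = (LEAST k. \<exists>c. proper_colouring V E k c)"

end

theory Submission
  imports Defs "HOL-Analysis.Harmonic_Numbers"
begin

text \<open>
  Put \<open>p = \<omega>/n\<close>. By vertex transitivity every vertex lies in the same number of maximum cliques,
  namely a \<open>p\<close>-fraction of them. Pick \<open>t = \<lfloor>ln 4 / p\<rfloor>\<close> maximum cliques independently and
  uniformly at random and let \<open>S\<close> be their union; the complement of the graph induced on \<open>S\<close> is
  \<open>t\<close>-colourable, each clique being independent there. An edge survives unless one of its endpoints
  is missed. By inclusion-exclusion, Turan's bound (an edge avoids on average a \<open>(1 - p)\<^sup>2\<close>-fraction
  of the maximum cliques) and convexity of \<open>y \<mapsto> y ^ t\<close>, the expected number of surviving edges is at
  least \<open>e (1 - (1 - p) ^ t)\<^sup>2\<close>, which is \<open>\<ge> e/2\<close> because \<open>(1 - p) ^ t \<le> 1 - 1/sqrt 2\<close>; here one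
  uses \<open>p \<le> 1/2\<close> unless the graph is complete.
\<close>

lemma ln_4_bounds: "138/100 \<le> ln (4::real)" "ln (4::real) \<le> 139/100"
proof -
  have "ln (4::real) = 2 * ln 2"
    using ln_realpow[of 2 2] by simp
  moreover have "ln (2::real) \<in> {307/443..4615/6658}"
    using ln_approx_bounds[of 2 3] by (simp add: eval_nat_numeral)
  ultimately show "138/100 \<le> ln (4::real)" "ln (4::real) \<le> 139/100"
    by auto
qed

lemma power_one_minus_le_few_rounds:
  fixes p :: real
  assumes "p \<le> 1/2" and t_gt: "ln 4 < p * (real t + 1)" and "t \<le> 9"
  shows "(1 - p) ^ t \<le> 0.2928"
proof -
  have "p * (real t + 1) \<le> 1/2 * (real t + 1)"
    using assms by (intro mult_right_mono) auto
  then have "1 < real t"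
    using t_gt ln_4_bounds by argo
  then have "2 \<le> t"
    by simp
  have "138/100 / (real t + 1) < p"
    using t_gt ln_4_bounds by (simp add: divide_less_eq algebra_simps)
  then have "(1 - p) ^ t \<le> (1 - 138/100 / (real t + 1)) ^ t"
    using \<open>p \<le> 1/2\<close> \<open>2 \<le> t\<close> by (intro power_mono) (auto simp: field_simps)
  also have "\<dots> \<le> 0.2928"
  proof -
    have "t \<in> {2, 3, 4, 5, 6, 7, 8, 9}"
      using \<open>t \<le> 9\<close> \<open>2 \<le> t\<close> by auto
    then show ?thesis
      by (auto simp: eval_nat_numeral)
  qed
  finally show ?thesis .
qed

lemma power_one_minus_le_many_rounds:
  fixes p :: real
  assumes "0 < p" and t_le: "p * real t \<le> ln 4" and t_gt: "ln 4 < p * (real t + 1)" and "10 \<le> t"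
  shows "(1 - p) ^ t \<le> 0.2928"
proof -
  have "p * 10 \<le> p * real t"
    using assms by simp
  then have p_small: "p \<le> 139/1000"
    using t_le ln_4_bounds by linarith
  have "(1 - p) ^ t \<le> exp (- p) ^ t"
    using exp_ge_add_one_self[of "- p"] p_small by (intro power_mono) auto
  also have "\<dots> = exp (- (p * real t))"
    by (simp add: exp_of_nat_mult[symmetric] mult.commute)
  also have "\<dots> \<le> exp (p - ln 4)"
    using t_gt by (simp add: algebra_simps)
  also have "\<dots> = exp p / 4"
    by (simp add: exp_diff)
  also have "\<dots> \<le> (1 + p + p\<^sup>2) / 4"
    using exp_bound[of p] \<open>0 < p\<close> p_small by simp
  also have "\<dots> \<le> 0.2928"
  proof -
    have "p\<^sup>2 \<le> (139/1000)\<^sup>2"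
      using \<open>0 < p\<close> p_small by (intro power_mono) auto
    then show ?thesis
      using p_small by (simp add: power2_eq_square)
  qed
  finally show ?thesis .
qed

lemma power_one_minus_floor_ln_4_div_le:
  fixes p :: real
  assumes "0 < p" and "p \<le> 1/2 \<or> p = 1"
  shows "(1 - p) ^ nat \<lfloor>ln 4 / p\<rfloor> \<le> 0.2928"
proof -
  define t where "t = nat \<lfloor>ln 4 / p\<rfloor>"
  have "real t \<le> ln 4 / p" "ln 4 / p < real t + 1"
    using \<open>0 < p\<close> by (simp_all add: t_def)
  then have t_le: "p * real t \<le> ln 4" and t_gt: "ln 4 < p * (real t + 1)"
    using \<open>0 < p\<close> by (simp_all add: le_divide_eq divide_less_eq mult.commute)
  consider "p = 1" | "p \<le> 1/2" "t \<le> 9" | "10 \<le> t"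
    using assms by linarith
  then have "(1 - p) ^ t \<le> 0.2928"
  proof cases
    case 1
    then have "0 < t"
      using t_gt ln_4_bounds by auto
    then show ?thesis
      using 1 by (simp add: power_0_left)
  next
    case 2
    then show ?thesis
      using t_gt power_one_minus_le_few_rounds by blast
  next
    case 3
    then show ?thesis
      using \<open>0 < p\<close> t_le t_gt power_one_minus_le_many_rounds by blast
  qed
  then show ?thesis
    by (simp add: t_def)
qed

lemma half_le_one_minus_power_floor_ln_4_div_sq:
  fixes p :: real
  assumes "0 < p" and "p \<le> 1/2 \<or> p = 1"
  shows "1/2 \<le> (1 - (1 - p) ^ nat \<lfloor>ln 4 / p\<rfloor>)\<^sup>2"
proof -
  define x where "x = (1 - p) ^ nat \<lfloor>ln 4 / p\<rfloor>"
  have "0 \<le> x" "x \<le> 0.2928"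
    using assms power_one_minus_floor_ln_4_div_le[OF assms] by (auto simp: x_def)
  then have "0.7072\<^sup>2 \<le> (1 - x)\<^sup>2"
    by (intro power_mono) auto
  then show ?thesis
    by (simp add: x_def power2_eq_square)
qed

lemma card_PiE_filter_all:
  assumes "finite A"
  shows "card {f \<in> PiE {..<t} (\<lambda>_. A). \<forall>i<t. P (f i)} = card {a \<in> A. P a} ^ t"
proof -
  have "{f \<in> PiE {..<t} (\<lambda>_. A). \<forall>i<t. P (f i)} = PiE {..<t} (\<lambda>_. {a \<in> A. P a})"
    by (auto simp: PiE_iff extensional_def)
  then show ?thesis
    by (simp add: card_PiE)
qed

lemma of_nat_card_filter_eq_sum_of_bool:
  "finite A \<Longrightarrow> of_nat (card {x \<in> A. P x}) = (\<Sum>x\<in>A. of_bool (P x))"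
  by (simp add: Int_def)

lemma power_ge_tangent_line:
  fixes y b :: real
  assumes "0 \<le> y" and "0 \<le> b"
  shows "b ^ Suc m + real (Suc m) * b ^ m * (y - b) \<le> y ^ Suc m"
proof (induction m)
  case 0
  then show ?case by simp
next
  case (Suc m)
  have "b ^ Suc (Suc m) + real (Suc (Suc m)) * b ^ Suc m * (y - b)
      = y * (b ^ Suc m + real (Suc m) * b ^ m * (y - b)) - real (Suc m) * b ^ m * (y - b)\<^sup>2"
    by (simp add: power2_eq_square algebra_simps)
  also have "\<dots> \<le> y * (b ^ Suc m + real (Suc m) * b ^ m * (y - b))"
    using \<open>0 \<le> b\<close> by simp
  also have "\<dots> \<le> y * y ^ Suc m"
    using Suc \<open>0 \<le> y\<close> by (rule mult_left_mono)
  finally show ?case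
    by simp
qed

lemma card_mult_power_le_sum_power:
  fixes y :: "'a \<Rightarrow> real"
  assumes "finite A" and "\<And>a. a \<in> A \<Longrightarrow> 0 \<le> y a" and "0 \<le> b"
    and mean: "real (card A) * b \<le> (\<Sum>a\<in>A. y a)"
  shows "real (card A) * b ^ t \<le> (\<Sum>a\<in>A. y a ^ t)"
proof (cases t)
  case 0
  then show ?thesis by simp
next
  case (Suc m)
  have "real (card A) * b ^ t
      \<le> real (card A) * b ^ t + real t * b ^ m * ((\<Sum>a\<in>A. y a) - real (card A) * b)"
    using mean \<open>0 \<le> b\<close> by simp
  also have "\<dots> = (\<Sum>a\<in>A. b ^ t + real t * b ^ m * (y a - b))"
    by (simp add: sum.distrib sum_distrib_left[symmetric] sum_subtractf)
  also have "\<dots> \<le> (\<Sum>a\<in>A. y a ^ t)"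
    using power_ge_tangent_line assms Suc by (intro sum_mono) auto
  finally show ?thesis .
qed

lemma exists_ge_average:
  fixes g :: "'a \<Rightarrow> real"
  assumes "finite T" and "T \<noteq> {}" and "real (card T) * c \<le> (\<Sum>x\<in>T. g x)"
  shows "\<exists>x\<in>T. c \<le> g x"
proof (rule ccontr)
  assume "\<not> (\<exists>x\<in>T. c \<le> g x)"
  then have "(\<Sum>x\<in>T. g x) < (\<Sum>x\<in>T. c)"
    using assms by (intro sum_strict_mono) auto
  then show False
    using assms by simp
qed

lemma chromatic_number_complement_Union_cliques_le:
  assumes "\<And>i. i < t \<Longrightarrow> is_clique V E (C i)"
  shows "chromatic_number (\<Union>i<t. C i)
           (complement_edges (\<Union>i<t. C i) (induced_edges E (\<Union>i<t. C i))) \<le> t"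
proof -
  define S where "S = (\<Union>i<t. C i)"
  define colour where "colour v = (LEAST i. i < t \<and> v \<in> C i)" for v
  have colour: "colour v < t \<and> v \<in> C (colour v)" if v: "v \<in> S" for v
  proof -
    obtain i where "i < t \<and> v \<in> C i"
      using v by (auto simp: S_def)
    then show ?thesis
      unfolding colour_def by (rule LeastI)
  qed
  have "proper_colouring S (complement_edges S (induced_edges E S)) t colour"
    unfolding proper_colouring_def
  proof (intro conjI ballI impI)
    show "colour ` S \<subseteq> {..<t}"
      using colour by auto
  next
    fix u v
    assume "u \<in> S" "v \<in> S" "{u, v} \<in> complement_edges S (induced_edges E S)"
    then obtain a b where "{u, v} = {a, b}" "a \<noteq> b" "{a, b} \<notin> induced_edges E S"
      by (auto simp: complement_edges_def)
    then have "u \<noteq> v" "{u, v} \<notin> E"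
      using \<open>u \<in> S\<close> \<open>v \<in> S\<close> by (auto simp: induced_edges_def doubleton_eq_iff insert_commute)
    show "colour u \<noteq> colour v"
    proof
      assume "colour u = colour v"
      then have "colour u < t" "u \<in> C (colour u)" "v \<in> C (colour u)"
        using colour[OF \<open>u \<in> S\<close>] colour[OF \<open>v \<in> S\<close>] by auto
      then show False
        using assms \<open>u \<noteq> v\<close> \<open>{u, v} \<notin> E\<close> unfolding is_clique_def by blast
    qed
  qed
  then have "\<exists>c. proper_colouring S (complement_edges S (induced_edges E S)) t c"
    by blast
  then show ?thesis
    unfolding chromatic_number_def S_def[symmetric] by (rule Least_le)
qed

locale vertex_transitive_graph =
  fixes V :: "'a set" and E :: "'a set set"
  assumes simple: "simple_graph V E" and transitive: "vertex_transitive V E"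
begin

abbreviation \<omega> :: nat where "\<omega> \<equiv> clique_number V E"

lemma finite_V: "finite V"
  using simple by (simp add: simple_graph_def)

lemma edgeE:
  assumes "e \<in> E"
  obtains u v where "e = {u, v}" "u \<noteq> v" "u \<in> V" "v \<in> V"
  using simple assms by (auto simp: simple_graph_def)

lemma card_edge: "e \<in> E \<Longrightarrow> card e = 2"
  by (auto elim: edgeE)

lemma E_subset_Pow_V: "E \<subseteq> Pow V"
  by (auto elim: edgeE)

lemma finite_E: "finite E"
  using E_subset_Pow_V finite_V by (meson finite_Pow_iff finite_subset)

lemma singleton_notin_E: "{u} \<notin> E"
  using card_edge by fastforce

lemma finite_clique: "is_clique V E C \<Longrightarrow> finite C"
  using finite_V by (auto simp: is_clique_def intro: finite_subset)

lemma finite_clique_sizes: "finite {card C | C. is_clique V E C}"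
proof (rule finite_subset)
  show "{card C | C. is_clique V E C} \<subseteq> {..card V}"
    using finite_V by (auto simp: is_clique_def intro: card_mono)
qed simp

lemma card_clique_le_clique_number: "is_clique V E C \<Longrightarrow> card C \<le> \<omega>"
  unfolding clique_number_def using finite_clique_sizes by (auto intro: Max_ge)

lemma ex_clique_card_clique_number: "\<exists>C. is_clique V E C \<and> card C = \<omega>"
proof -
  have "is_clique V E {}"
    by (simp add: is_clique_def)
  then have "\<omega> \<in> {card C | C. is_clique V E C}"
    unfolding clique_number_def using finite_clique_sizes by (intro Max_in) auto
  then show ?thesis
    by auto
qed

lemma clique_number_le_card: "\<omega> \<le> card V"
  using ex_clique_card_clique_number finite_V by (metis card_mono is_clique_def)

lemma clique_number_pos: "V \<noteq> {} \<Longrightarrow> 0 < \<omega>"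
  using card_clique_le_clique_number[of "{v}" for v] by (fastforce simp: is_clique_def)

definition max_cliques :: "'a set set" where
  "max_cliques = {C. is_clique V E C \<and> card C = \<omega>}"

lemma max_cliques_subset_Pow_V: "max_cliques \<subseteq> Pow V"
  by (auto simp: max_cliques_def is_clique_def)

lemma finite_max_cliques: "finite max_cliques"
  using max_cliques_subset_Pow_V finite_V by (meson finite_Pow_iff finite_subset)

lemma card_max_cliques_pos: "0 < card max_cliques"
  using ex_clique_card_clique_number finite_max_cliques
  by (auto simp: card_gt_0_iff max_cliques_def)

lemma image_max_clique_automorphism:
  assumes f: "graph_automorphism V E f" and C: "C \<in> max_cliques"
  shows "f ` C \<in> max_cliques"
proof -
  have "bij_betw f V V" and adj: "\<forall>u\<in>V. \<forall>v\<in>V. {u, v} \<in> E \<longleftrightarrow> {f u, f v} \<in> E"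
    using f by (auto simp: graph_automorphism_def)
  moreover have "C \<subseteq> V"
    using C by (auto simp: max_cliques_def is_clique_def)
  ultimately have "f ` C \<subseteq> V" and "card (f ` C) = card C"
    by (fastforce simp: bij_betw_def, meson bij_betw_def card_image inj_on_subset)
  moreover have "{f u, f v} \<in> E" if "u \<in> C" "v \<in> C" "f u \<noteq> f v" for u v
  proof -
    have "{u, v} \<in> E"
      using C that by (auto simp: max_cliques_def is_clique_def)
    then show ?thesis
      using adj that \<open>C \<subseteq> V\<close> by blast
  qed
  ultimately show ?thesis
    using C by (auto simp: max_cliques_def is_clique_def)
qed

definition max_clique_degree :: "'a \<Rightarrow> nat" where
  "max_clique_degree u = card {C \<in> max_cliques. u \<in> C}"

lemma max_clique_degree_le:
  assumes "u \<in> V" and "v \<in> V"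
  shows "max_clique_degree u \<le> max_clique_degree v"
proof -
  obtain f where f: "graph_automorphism V E f" "f u = v"
    using transitive assms by (auto simp: vertex_transitive_def)
  then have "inj_on f V"
    by (auto simp: graph_automorphism_def bij_betw_def)
  have "inj_on (image f) {C \<in> max_cliques. u \<in> C}"
  proof (rule inj_onI)
    fix C D
    assume "C \<in> {C \<in> max_cliques. u \<in> C}" "D \<in> {C \<in> max_cliques. u \<in> C}" "f ` C = f ` D"
    then show "C = D"
      using \<open>inj_on f V\<close> max_cliques_subset_Pow_V inj_on_image_eq_iff[of f V C D] by auto
  qed
  moreover have "image f ` {C \<in> max_cliques. u \<in> C} \<subseteq> {C \<in> max_cliques. v \<in> C}"
    using image_max_clique_automorphism[OF f(1)] f(2) by auto
  ultimately show ?thesis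
    unfolding max_clique_degree_def using finite_max_cliques by (intro card_inj_on_le) auto
qed

lemma max_clique_degree_eq: "u \<in> V \<Longrightarrow> v \<in> V \<Longrightarrow> max_clique_degree u = max_clique_degree v"
  using max_clique_degree_le le_antisym by blast

lemma sum_card_Int_max_cliques:
  assumes "X \<subseteq> V" and "v \<in> V"
  shows "(\<Sum>C\<in>max_cliques. card (X \<inter> C)) = card X * max_clique_degree v"
proof -
  have "finite X"
    using assms finite_V finite_subset by blast
  have "(\<Sum>C\<in>max_cliques. card (X \<inter> C)) = (\<Sum>C\<in>max_cliques. \<Sum>x\<in>X. of_bool (x \<in> C))"
    using \<open>finite X\<close> by (simp add: Int_def)
  also have "\<dots> = (\<Sum>x\<in>X. \<Sum>C\<in>max_cliques. of_bool (x \<in> C))"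
    by (rule sum.swap)
  also have "\<dots> = (\<Sum>x\<in>X. max_clique_degree v)"
  proof (rule sum.cong)
    fix x
    assume "x \<in> X"
    then have "max_clique_degree x = max_clique_degree v"
      using assms max_clique_degree_eq by blast
    then show "(\<Sum>C\<in>max_cliques. of_bool (x \<in> C)) = max_clique_degree v"
      using finite_max_cliques by (simp add: max_clique_degree_def Int_def)
  qed simp
  finally show ?thesis
    by simp
qed

lemma card_max_cliques_mult_clique_number:
  assumes "v \<in> V"
  shows "card max_cliques * \<omega> = card V * max_clique_degree v"
proof -
  have "(\<Sum>C\<in>max_cliques. card (V \<inter> C)) = (\<Sum>C\<in>max_cliques. \<omega>)"
    by (intro sum.cong) (auto simp: max_cliques_def is_clique_def Int_absorb1)
  then have "card max_cliques * \<omega> = (\<Sum>C\<in>max_cliques. card (V \<inter> C))"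
    by simp
  also have "\<dots> = card V * max_clique_degree v"
    using assms by (rule sum_card_Int_max_cliques[OF subset_refl])
  finally show ?thesis .
qed

definition clique_density :: real where
  "clique_density = real \<omega> / real (card V)"

lemma max_clique_degree_eq_density:
  assumes "v \<in> V"
  shows "real (max_clique_degree v) = real (card max_cliques) * clique_density"
proof -
  have "0 < card V"
    using assms finite_V card_gt_0_iff by blast
  then show ?thesis
    using arg_cong[OF card_max_cliques_mult_clique_number[OF assms], of real]
    by (simp add: clique_density_def field_simps)
qed

lemma clique_density_pos: "V \<noteq> {} \<Longrightarrow> 0 < clique_density"
  using clique_number_pos finite_V by (simp add: clique_density_def card_gt_0_iff)

lemma clique_density_le_half_or_one:
  assumes "V \<noteq> {}"
  shows "clique_density \<le> 1/2 \<or> clique_density = 1"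
proof (cases "is_clique V E V")
  case True
  then have "\<omega> = card V"
    using card_clique_le_clique_number clique_number_le_card le_antisym by blast
  then show ?thesis
    using assms finite_V by (simp add: clique_density_def)
next
  case False
  then obtain u v where uv: "u \<in> V" "v \<in> V" "u \<noteq> v" "{u, v} \<notin> E"
    by (auto simp: is_clique_def)
  have "2 * max_clique_degree u = (\<Sum>C\<in>max_cliques. card ({u, v} \<inter> C))"
    using sum_card_Int_max_cliques[of "{u, v}" u] uv by simp
  also have "\<dots> \<le> (\<Sum>C\<in>max_cliques. 1)"
  proof (rule sum_mono)
    fix C
    assume "C \<in> max_cliques"
    then have "{u, v} \<inter> C \<subseteq> {u} \<or> {u, v} \<inter> C \<subseteq> {v}"
      using uv by (auto simp: max_cliques_def is_clique_def)
    then show "card ({u, v} \<inter> C) \<le> 1"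
      using card_mono[of "{u}" "{u, v} \<inter> C"] card_mono[of "{v}" "{u, v} \<inter> C"] by auto
  qed
  finally have "real (2 * max_clique_degree u) \<le> real (card max_cliques)"
    by simp
  then have "2 * (real (card max_cliques) * clique_density) \<le> real (card max_cliques)"
    using max_clique_degree_eq_density[OF uv(1)] by simp
  then show ?thesis
    using card_max_cliques_pos by simp
qed

lemma card_incident_edges: "card {e \<in> E. u \<in> e} = card {v \<in> V. {u, v} \<in> E}"
proof -
  have "bij_betw (\<lambda>v. {u, v}) {v \<in> V. {u, v} \<in> E} {e \<in> E. u \<in> e}"
  proof (rule bij_betwI')
    fix x y
    assume "x \<in> {v \<in> V. {u, v} \<in> E}" "y \<in> {v \<in> V. {u, v} \<in> E}"
    then have "x \<noteq> u" "y \<noteq> u"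
      using singleton_notin_E by force+
    then show "({u, x} = {u, y}) = (x = y)"
      by (auto simp: doubleton_eq_iff)
  next
    fix e
    assume e: "e \<in> {e \<in> E. u \<in> e}"
    then obtain a b where "e = {a, b}" "a \<in> V" "b \<in> V"
      by (blast elim: edgeE)
    then have "(e = {u, b} \<and> b \<in> V) \<or> (e = {u, a} \<and> a \<in> V)"
      using e by (auto simp: insert_commute)
    then show "\<exists>x\<in>{v \<in> V. {u, v} \<in> E}. e = {u, x}"
      using e by auto
  qed simp
  then show ?thesis
    by (simp add: bij_betw_same_card)
qed

lemma card_neighbours_in_max_clique:
  assumes C: "C \<in> max_cliques" and "v \<in> V"
  shows "card {u \<in> C. {u, v} \<in> E} \<le> \<omega> - 1"
proof -
  have "finite C" and "card C = \<omega>"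
    using C finite_clique by (auto simp: max_cliques_def)
  have "{u \<in> C. {u, v} \<in> E} \<noteq> C"
  proof (cases "v \<in> C")
    case True
    have "v \<notin> {u \<in> C. {u, v} \<in> E}"
      using singleton_notin_E[of v] by simp
    then show ?thesis
      using True by blast
  next
    case False
    have "\<not> is_clique V E (insert v C)"
      using card_clique_le_clique_number \<open>finite C\<close> \<open>card C = \<omega>\<close> False by fastforce
    then show ?thesis
      using C \<open>v \<in> V\<close> by (auto simp: max_cliques_def is_clique_def insert_commute)
  qed
  then have "card {u \<in> C. {u, v} \<in> E} < card C"
    using \<open>finite C\<close> by (intro psubset_card_mono) auto
  then show ?thesis
    using \<open>card C = \<omega>\<close> by simp
qed

lemma sum_card_edge_Int_max_clique_le:
  assumes C: "C \<in> max_cliques"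
  shows "(\<Sum>e\<in>E. card (e \<inter> C)) \<le> card V * (\<omega> - 1)"
proof -
  have "finite C"
    using C finite_clique by (auto simp: max_cliques_def)
  have "(\<Sum>e\<in>E. card (e \<inter> C)) = (\<Sum>e\<in>E. \<Sum>u\<in>C. of_bool (u \<in> e))"
    using \<open>finite C\<close> by (simp add: Int_def conj_commute)
  also have "\<dots> = (\<Sum>u\<in>C. card {e \<in> E. u \<in> e})"
    using finite_E by (subst sum.swap) (simp add: Int_def)
  also have "\<dots> = (\<Sum>u\<in>C. \<Sum>v\<in>V. of_bool ({u, v} \<in> E))"
    using card_incident_edges finite_V by (intro sum.cong) (auto simp: Int_def)
  also have "\<dots> = (\<Sum>v\<in>V. card {u \<in> C. {u, v} \<in> E})"
    using \<open>finite C\<close> by (subst sum.swap) (simp add: Int_def)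
  also have "\<dots> \<le> (\<Sum>v\<in>V. \<omega> - 1)"
    using card_neighbours_in_max_clique[OF C] by (intro sum_mono) auto
  finally show ?thesis
    by simp
qed

lemma card_edges_mult_max_clique_degree_le:
  assumes "v \<in> V"
  shows "card E * (2 * max_clique_degree v) \<le> card max_cliques * (card V * (\<omega> - 1))"
proof -
  have "(\<Sum>e\<in>E. \<Sum>C\<in>max_cliques. card (e \<inter> C)) = (\<Sum>e\<in>E. 2 * max_clique_degree v)"
    using sum_card_Int_max_cliques assms E_subset_Pow_V card_edge by (intro sum.cong) auto
  then have "card E * (2 * max_clique_degree v) = (\<Sum>C\<in>max_cliques. \<Sum>e\<in>E. card (e \<inter> C))"
    by (subst sum.swap) simp
  also have "\<dots> \<le> card max_cliques * (card V * (\<omega> - 1))"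
    using sum_mono[of max_cliques _ "\<lambda>_. card V * (\<omega> - 1)"] sum_card_edge_Int_max_clique_le by simp
  finally show ?thesis .
qed

text \<open>Turan's bound \<open>e \<le> (1 - 1/\<omega>) n\<^sup>2 / 2\<close> in disguise.\<close>
lemma turan_bound:
  assumes "v \<in> V"
  shows "real (card E) * clique_density\<^sup>2 \<le> real \<omega> * (real \<omega> - 1) / 2"
proof -
  define p where "p = clique_density"
  have "0 < card V" "0 < \<omega>"
    using assms finite_V clique_number_pos by (auto simp: card_gt_0_iff)
  then have "card V * p = \<omega>" "1 \<le> \<omega>"
    by (auto simp: p_def clique_density_def)
  have "real (card E * (2 * max_clique_degree v)) \<le> real (card max_cliques * (card V * (\<omega> - 1)))"
    using card_edges_mult_max_clique_degree_le[OF assms] by (rule of_nat_mono)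
  then have "real (card max_cliques) * (real (card E) * 2 * p)
      \<le> real (card max_cliques) * (real (card V) * (real \<omega> - 1))"
    using max_clique_degree_eq_density[OF assms] \<open>1 \<le> \<omega>\<close> by (simp add: of_nat_diff p_def algebra_simps)
  then have "real (card E) * 2 * p \<le> real (card V) * (real \<omega> - 1)"
    using card_max_cliques_pos by simp
  moreover have "0 \<le> p"
    by (simp add: p_def clique_density_def)
  ultimately have "real (card E) * 2 * p * p \<le> real (card V) * (real \<omega> - 1) * p"
    by (rule mult_right_mono)
  then have "real (card E) * p\<^sup>2 * 2 \<le> (real (card V) * p) * (real \<omega> - 1)"
    by (simp add: power2_eq_square algebra_simps)
  then show ?thesis
    unfolding \<open>card V * p = \<omega>\<close> by (simp add: p_def)
qed

lemma card_edges_within_max_clique: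
  assumes C: "C \<in> max_cliques"
  shows "card {e \<in> E. e \<subseteq> C} = \<omega> choose 2"
proof -
  have "{e \<in> E. e \<subseteq> C} = {B. B \<subseteq> C \<and> card B = 2}"
    using C card_edge by (auto simp: card_2_iff max_cliques_def is_clique_def)
  moreover have "finite C" "card C = \<omega>"
    using C finite_clique by (auto simp: max_cliques_def)
  ultimately show ?thesis
    by (simp add: n_subsets)
qed

definition max_cliques_avoiding :: "'a set \<Rightarrow> nat" where
  "max_cliques_avoiding X = card {C \<in> max_cliques. X \<inter> C = {}}"

lemma max_cliques_avoiding_vertex:
  assumes "u \<in> V"
  shows "real (max_cliques_avoiding {u}) = real (card max_cliques) * (1 - clique_density)"
proof -
  have "max_cliques_avoiding {u} + max_clique_degree u = card max_cliques"
    unfolding max_cliques_avoiding_def max_clique_degree_def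
    using finite_max_cliques by (subst card_Un_disjoint[symmetric]) (auto intro: arg_cong[where f = card])
  then show ?thesis
    using max_clique_degree_eq_density[OF assms] by (simp add: algebra_simps flip: of_nat_add)
qed

lemma max_cliques_avoiding_edge:
  assumes e: "e \<in> E" and "v \<in> V"
  shows "real (max_cliques_avoiding e)
    = real (card max_cliques) - 2 * real (max_clique_degree v) + real (card {C \<in> max_cliques. e \<subseteq> C})"
proof -
  obtain a b where ab: "e = {a, b}" "a \<noteq> b"
    using e by (rule edgeE)
  have pointwise: "of_bool (e \<inter> C = {}) = 1 - real (card (e \<inter> C)) + of_bool (e \<subseteq> C)" for C
    using ab by (cases "a \<in> C"; cases "b \<in> C") (auto simp: Int_insert_left)
  have "real (max_cliques_avoiding e) = (\<Sum>C\<in>max_cliques. of_bool (e \<inter> C = {}))"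
    unfolding max_cliques_avoiding_def using finite_max_cliques by (rule of_nat_card_filter_eq_sum_of_bool)
  also have "\<dots> = (\<Sum>C\<in>max_cliques. 1 - real (card (e \<inter> C)) + of_bool (e \<subseteq> C))"
    unfolding pointwise ..
  also have "\<dots> = real (card max_cliques) - real (\<Sum>C\<in>max_cliques. card (e \<inter> C))
      + real (card {C \<in> max_cliques. e \<subseteq> C})"
    using finite_max_cliques
    by (simp add: sum.distrib sum_subtractf of_nat_card_filter_eq_sum_of_bool)
  also have "(\<Sum>C\<in>max_cliques. card (e \<inter> C)) = 2 * max_clique_degree v"
    using sum_card_Int_max_cliques[of e v] e \<open>v \<in> V\<close> E_subset_Pow_V card_edge by auto
  finally show ?thesis
    by simp
qed

lemma sum_max_cliques_avoiding_edges_ge: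
  assumes "v \<in> V"
  shows "real (card E) * (real (card max_cliques) * (1 - clique_density)\<^sup>2)
    \<le> (\<Sum>e\<in>E. real (max_cliques_avoiding e))"
proof -
  define K where "K = real (card max_cliques)"
  define p where "p = clique_density"
  have "(\<Sum>e\<in>E. real (card {C \<in> max_cliques. e \<subseteq> C}))
      = (\<Sum>e\<in>E. \<Sum>C\<in>max_cliques. of_bool (e \<subseteq> C))"
    using finite_max_cliques by (simp only: of_nat_card_filter_eq_sum_of_bool)
  also have "\<dots> = (\<Sum>C\<in>max_cliques. real (card {e \<in> E. e \<subseteq> C}))"
    using finite_E by (subst sum.swap) (simp only: of_nat_card_filter_eq_sum_of_bool)
  also have "\<dots> = K * real (\<omega> choose 2)"
    using card_edges_within_max_clique by (simp add: K_def)
  finally have "(\<Sum>e\<in>E. real (card {C \<in> max_cliques. e \<subseteq> C})) = K * real (\<omega> choose 2)" .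
  moreover have "real (\<omega> choose 2) = real \<omega> * (real \<omega> - 1) / 2"
    by (simp add: binomial_gbinomial gbinomial_pochhammer' pochhammer_Suc_prod numeral_2_eq_2 algebra_simps)
  ultimately have "(\<Sum>e\<in>E. real (max_cliques_avoiding e))
      = real (card E) * (K - 2 * (K * p)) + K * (real \<omega> * (real \<omega> - 1) / 2)"
    using max_cliques_avoiding_edge[OF _ assms] max_clique_degree_eq_density[OF assms]
    by (simp add: sum.distrib sum_subtractf K_def p_def)
  also have "\<dots> \<ge> real (card E) * (K - 2 * (K * p)) + K * (real (card E) * p\<^sup>2)"
    using mult_left_mono[OF turan_bound[OF assms], of K] by (simp add: K_def p_def)
  finally show ?thesis
    by (simp add: K_def p_def power2_eq_square algebra_simps)
qed

text \<open>Drawing \<open>t\<close> maximum cliques independently and uniformly at random means drawing uniformly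
  from this set, so expectations become sums over it.\<close>
definition clique_tuples :: "nat \<Rightarrow> (nat \<Rightarrow> 'a set) set" where
  "clique_tuples t = PiE {..<t} (\<lambda>_. max_cliques)"

lemma finite_clique_tuples: "finite (clique_tuples t)"
  using finite_max_cliques by (simp add: clique_tuples_def finite_PiE)

lemma card_clique_tuples: "card (clique_tuples t) = card max_cliques ^ t"
  by (simp add: clique_tuples_def card_PiE)

lemma clique_tuple_clique: "f \<in> clique_tuples t \<Longrightarrow> i < t \<Longrightarrow> is_clique V E (f i)"
  by (auto simp: clique_tuples_def max_cliques_def)

lemma Union_clique_tuple_subset: "f \<in> clique_tuples t \<Longrightarrow> (\<Union>i<t. f i) \<subseteq> V"
  using clique_tuple_clique by (auto simp: is_clique_def)

lemma card_clique_tuples_avoiding: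
  "card {f \<in> clique_tuples t. X \<inter> (\<Union>i<t. f i) = {}} = max_cliques_avoiding X ^ t"
proof -
  have "{f \<in> clique_tuples t. X \<inter> (\<Union>i<t. f i) = {}}
      = {f \<in> PiE {..<t} (\<lambda>_. max_cliques). \<forall>i<t. X \<inter> f i = {}}"
    by (auto simp: clique_tuples_def)
  then show ?thesis
    using card_PiE_filter_all[OF finite_max_cliques, of t "\<lambda>C. X \<inter> C = {}"]
    by (simp add: max_cliques_avoiding_def)
qed

lemma card_clique_tuples_covering_edge:
  assumes e: "e \<in> E" and v: "v \<in> V"
  shows "real (card {f \<in> clique_tuples t. e \<subseteq> (\<Union>i<t. f i)})
    = real (card max_cliques) ^ t - 2 * (real (card max_cliques) * (1 - clique_density)) ^ t
      + real (max_cliques_avoiding e) ^ t"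
proof -
  obtain a b where ab: "e = {a, b}" "a \<in> V" "b \<in> V"
    using e by (rule edgeE)
  let ?T = "clique_tuples t" and ?U = "\<lambda>f. \<Union>i<t. f i"
  have pointwise: "of_bool (e \<subseteq> ?U f)
      = 1 - of_bool ({a} \<inter> ?U f = {}) - of_bool ({b} \<inter> ?U f = {}) + (of_bool (e \<inter> ?U f = {}) :: real)"
    for f
    using ab by (cases "a \<in> ?U f"; cases "b \<in> ?U f") auto
  have "real (card {f \<in> ?T. e \<subseteq> ?U f}) = (\<Sum>f\<in>?T. of_bool (e \<subseteq> ?U f))"
    using finite_clique_tuples by (rule of_nat_card_filter_eq_sum_of_bool)
  also have "\<dots> = (\<Sum>f\<in>?T. 1 - of_bool ({a} \<inter> ?U f = {}) - of_bool ({b} \<inter> ?U f = {})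
      + (of_bool (e \<inter> ?U f = {}) :: real))"
    unfolding pointwise ..
  also have "\<dots> = real (card ?T) - real (card {f \<in> ?T. {a} \<inter> ?U f = {}})
      - real (card {f \<in> ?T. {b} \<inter> ?U f = {}}) + real (card {f \<in> ?T. e \<inter> ?U f = {}})"
    using finite_clique_tuples
    by (simp only: sum.distrib sum_subtractf of_nat_card_filter_eq_sum_of_bool) simp
  also have "\<dots> = real (card max_cliques) ^ t - 2 * (real (card max_cliques) * (1 - clique_density)) ^ t
      + real (max_cliques_avoiding e) ^ t"
    unfolding card_clique_tuples card_clique_tuples_avoiding
    using max_cliques_avoiding_vertex ab by simp
  finally show ?thesis .
qed

lemma sum_card_induced_edges_ge:
  assumes "v \<in> V"
  shows "real (card E) * real (card max_cliques) ^ t * (1 - (1 - clique_density) ^ t)\<^sup>2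
    \<le> (\<Sum>f\<in>clique_tuples t. real (card (induced_edges E (\<Union>i<t. f i))))"
proof -
  define K where "K = real (card max_cliques)"
  define x where "x = (1 - clique_density) ^ t"
  have "(\<Sum>f\<in>clique_tuples t. real (card (induced_edges E (\<Union>i<t. f i))))
      = (\<Sum>f\<in>clique_tuples t. \<Sum>e\<in>E. of_bool (e \<subseteq> (\<Union>i<t. f i)))"
    using finite_E by (simp only: induced_edges_def of_nat_card_filter_eq_sum_of_bool)
  also have "\<dots> = (\<Sum>e\<in>E. real (card {f \<in> clique_tuples t. e \<subseteq> (\<Union>i<t. f i)}))"
    using finite_clique_tuples by (subst sum.swap) (simp only: of_nat_card_filter_eq_sum_of_bool)
  also have "\<dots> = (\<Sum>e\<in>E. K ^ t - 2 * (K ^ t * x) + real (max_cliques_avoiding e) ^ t)"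
    using card_clique_tuples_covering_edge assms
    by (intro sum.cong) (simp_all add: K_def x_def power_mult_distrib)
  also have "\<dots> = real (card E) * (K ^ t - 2 * (K ^ t * x)) + (\<Sum>e\<in>E. real (max_cliques_avoiding e) ^ t)"
    by (simp add: sum.distrib)
  finally have sum_eq: "(\<Sum>f\<in>clique_tuples t. real (card (induced_edges E (\<Union>i<t. f i))))
      = real (card E) * (K ^ t - 2 * (K ^ t * x)) + (\<Sum>e\<in>E. real (max_cliques_avoiding e) ^ t)" .
  have "0 \<le> 1 - clique_density"
    using clique_density_le_half_or_one assms by fastforce
  then have "real (card E) * (K * (1 - clique_density)\<^sup>2) ^ t \<le> (\<Sum>e\<in>E. real (max_cliques_avoiding e) ^ t)"
    using sum_max_cliques_avoiding_edges_ge[OF assms] finite_E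
    by (intro card_mult_power_le_sum_power) (auto simp: K_def)
  moreover have "(K * (1 - clique_density)\<^sup>2) ^ t = K ^ t * x\<^sup>2"
    by (simp add: x_def power_mult_distrib flip: power_mult) (simp add: mult.commute)
  ultimately show ?thesis
    unfolding sum_eq by (simp add: K_def x_def power2_eq_square algebra_simps)
qed

lemma ex_clique_tuple_many_induced_edges:
  assumes "v \<in> V"
  obtains f where "f \<in> clique_tuples t"
    and "real (card E) * (1 - (1 - clique_density) ^ t)\<^sup>2 \<le> real (card (induced_edges E (\<Union>i<t. f i)))"
proof -
  have "clique_tuples t \<noteq> {}"
    using card_clique_tuples card_max_cliques_pos by (metis card.empty power_not_zero not_less_zero)
  moreover have "real (card (clique_tuples t)) * (real (card E) * (1 - (1 - clique_density) ^ t)\<^sup>2)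
      \<le> (\<Sum>f\<in>clique_tuples t. real (card (induced_edges E (\<Union>i<t. f i))))"
    using sum_card_induced_edges_ge[OF assms] by (simp add: card_clique_tuples algebra_simps)
  ultimately show ?thesis
    using that exists_ge_average[OF finite_clique_tuples] by blast
qed

lemma ex_induced_subgraph_half_edges:
  assumes "V \<noteq> {}"
  obtains S where "S \<subseteq> V" and "real (card E) / 2 \<le> real (card (induced_edges E S))"
    and "chromatic_number S (complement_edges S (induced_edges E S)) \<le> nat \<lfloor>ln 4 / clique_density\<rfloor>"
proof -
  define t where "t = nat \<lfloor>ln 4 / clique_density\<rfloor>"
  obtain v where "v \<in> V"
    using assms by blast
  then obtain f where f: "f \<in> clique_tuples t"
    and dense: "real (card E) * (1 - (1 - clique_density) ^ t)\<^sup>2 \<le> real (card (induced_edges E (\<Union>i<t. f i)))"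
    by (rule ex_clique_tuple_many_induced_edges)
  have "1/2 \<le> (1 - (1 - clique_density) ^ t)\<^sup>2"
    unfolding t_def
    using half_le_one_minus_power_floor_ln_4_div_sq clique_density_pos clique_density_le_half_or_one assms
    by blast
  then have "real (card E) * (1/2) \<le> real (card E) * (1 - (1 - clique_density) ^ t)\<^sup>2"
    by (rule mult_left_mono) simp
  moreover have "chromatic_number (\<Union>i<t. f i)
      (complement_edges (\<Union>i<t. f i) (induced_edges E (\<Union>i<t. f i))) \<le> t"
    using clique_tuple_clique[OF f] by (rule chromatic_number_complement_Union_cliques_le)
  ultimately show ?thesis
    using that[of "\<Union>i<t. f i"] Union_clique_tuple_subset[OF f] dense by (simp add: t_def)
qed

end

theorem lemma2p2:
  fixes V :: "'a set" and E :: "'a set set" and n :: nat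
  assumes "simple_graph V E"
    and "vertex_transitive V E"
    and "card V = n"
  shows "\<exists>S \<subseteq> V.
           real (num_edges (induced_edges E S)) \<ge> real (num_edges E) / 2 \<and>
           real (chromatic_number S (complement_edges S (induced_edges E S)))
             \<le> ln 4 * real n / real (clique_number V E)"
proof -
  interpret vertex_transitive_graph V E
    using assms(1,2) by unfold_locales
  show ?thesis
  proof (cases "V = {}")
    case True
    then have "E = {}"
      using E_subset_Pow_V card_edge by fastforce
    then show ?thesis
      using chromatic_number_complement_Union_cliques_le[of 0 V E]
      by (intro exI[of _ "{}"]) (simp add: num_edges_def induced_edges_def)
  next
    case False
    then obtain S where "S \<subseteq> V" "real (card E) / 2 \<le> real (card (induced_edges E S))"
      and "chromatic_number S (complement_edges S (induced_edges E S)) \<le> nat \<lfloor>ln 4 / clique_density\<rfloor>"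
      by (rule ex_induced_subgraph_half_edges)
    moreover have "real (nat \<lfloor>ln 4 / clique_density\<rfloor>) \<le> ln 4 * real n / real (clique_number V E)"
      using assms(3) by (simp add: clique_density_def)
    ultimately show ?thesis
      by (intro exI[of _ S]) (auto simp: num_edges_def intro: order_trans[OF of_nat_mono])
  qed
qed

end
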